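(* Let $Q$ be a non-degenerate non-convex (and not self-intersecting) quadrangle of perimeter $2$. Then its dual quadrangle $Q^\circ$ is also non-convex (and not self-intersecting).
   Context: Identify $\mathbb{R}^2$ with $\mathbb{C}$. A quadrangle $Q=ABCD$ is an ordered 4-tuple of points $A,B,C,D\in\mathbb{C}$: $A$ is the first vertex and the order $A\to B\to C\to D\to A$ is the direction of traversal. Its edge vectors are $z_1=B-A$, $z_2=C-B$, $z_3=D-C$, $z_4=A-D$, so $z_1+z_2+z_3+z_4=0$; its perimeter is $|z_1|+|z_2|+|z_3|+|z_4|$. $Q$ is non-degenerate if each pair of consecutive edge vectors $(z_1,z_2),(z_2,z_3),(z_3,z_4),(z_4,z_1)$ consists of nonzero, non-collinear vectors. A non-degenerate quadrangle is self-intersecting if one of the pairs of opposite edges (segments $AB$ and $CD$, or $BC$ and $DA$) intersect; it is convex if it is not self-intersecting and all its interior angles are less than $\pi$; it is non-convex if it is neither self-intersecting nor convex. Associated plane: for a non-degenerate $Q$ of perimeter $2$, choose $u_1,\dots,u_4\in\mathbb{C}$ with $u_k^2=z_k$, where $u_1$ is an arbitrary square root of $z_1$ and for $k=1,2,3$ the sign of $u_{k+1}$ is chosen so that $\operatorname{Im}(\overline{u_k}u_{k+1})$ has the same sign as $\operatorname{Im}(\overline{z_k}z_{k+1})$. Write $u_k=a_k+i b_k$ and $\bar a=(a_1,a_2,a_3,a_4)$, $\bar b=(b_1,b_2,b_3,b_4)$; these are orthonormal in $\mathbb{R}^4$. Let $\Pi=\operatorname{span}(\bar a,\bar b)$ and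 $\Pi^\perp$ its orthogonal complement. Dual quadrangle: choose an orthonormal basis $(\bar c,\bar d)$ of $\Pi^\perp$, put $w_k=(c_k+i d_k)^2$; then $\sum_k w_k=0$ and $\sum_k|w_k|=2$. The dual quadrangle $Q^\circ=KLMN$ is the quadrangle with $L-K=w_1$, $M-L=w_2$, $N-M=w_3$, $K-N=w_4$. It is determined up to rotation, reflection and translation. *)

theory Defs
  imports "HOL-Analysis.Analysis"
begin

definition qedge :: "complex \<Rightarrow> complex \<Rightarrow> complex \<Rightarrow> complex \<Rightarrow> nat \<Rightarrow> complex" where
  "qedge A B C D k =
     (if k = 1 then B - A else if k = 2 then C - B else if k = 3 then D - C else A - D)"

definition nxt :: "nat \<Rightarrow> nat" where
  "nxt k = (if k = 4 then 1 else Suc k)"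

definition perimeter :: "complex \<Rightarrow> complex \<Rightarrow> complex \<Rightarrow> complex \<Rightarrow> real" where
  "perimeter A B C D = (\<Sum>k=1..4. cmod (qedge A B C D k))"

definition noncollinear_pair :: "complex \<Rightarrow> complex \<Rightarrow> bool" where
  "noncollinear_pair v w \<longleftrightarrow> v \<noteq> 0 \<and> w \<noteq> 0 \<and> \<not> (\<exists>t::real. w = t *\<^sub>R v)"

definition nondegenerate :: "complex \<Rightarrow> complex \<Rightarrow> complex \<Rightarrow> complex \<Rightarrow> bool" where
  "nondegenerate A B C D \<longleftrightarrow>
     (\<forall>k\<in>{1..4}. noncollinear_pair (qedge A B C D k) (qedge A B C D (nxt k)))"

definition self_intersecting :: "complex \<Rightarrow> complex \<Rightarrow> complex \<Rightarrow> complex \<Rightarrow> bool" where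
  "self_intersecting A B C D \<longleftrightarrow> nondegenerate A B C D \<and>
     (closed_segment A B \<inter> closed_segment C D \<noteq> {} \<or>
      closed_segment B C \<inter> closed_segment D A \<noteq> {})"

text \<open>Signed (shoelace) area; positive iff the traversal is counterclockwise.\<close>
definition signed_area :: "complex \<Rightarrow> complex \<Rightarrow> complex \<Rightarrow> complex \<Rightarrow> real" where
  "signed_area A B C D = Im (cnj A * B + cnj B * C + cnj C * D + cnj D * A) / 2"

text \<open>Interior angle at the vertex between edge k and edge (k+1 mod 4):
  pi minus the signed turning angle, the sign taken with respect to the orientation.\<close>
definition interior_angle :: "complex \<Rightarrow> complex \<Rightarrow> complex \<Rightarrow> complex \<Rightarrow> nat \<Rightarrow> real" where
  "interior_angle A B C D k =
     pi - sgn (signed_area A B C D) * Arg (qedge A B C D (nxt k) / qedge A B C D k)"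

definition convex_quad :: "complex \<Rightarrow> complex \<Rightarrow> complex \<Rightarrow> complex \<Rightarrow> bool" where
  "convex_quad A B C D \<longleftrightarrow> nondegenerate A B C D \<and> \<not> self_intersecting A B C D \<and>
     (\<forall>k\<in>{1..4}. interior_angle A B C D k < pi)"

definition nonconvex_quad :: "complex \<Rightarrow> complex \<Rightarrow> complex \<Rightarrow> complex \<Rightarrow> bool" where
  "nonconvex_quad A B C D \<longleftrightarrow> nondegenerate A B C D \<and> \<not> self_intersecting A B C D \<and>
     \<not> convex_quad A B C D"

definition admissible_roots :: "complex \<Rightarrow> complex \<Rightarrow> complex \<Rightarrow> complex \<Rightarrow> (nat \<Rightarrow> complex) \<Rightarrow> bool" where
  "admissible_roots A B C D u \<longleftrightarrow>
     (\<forall>k\<in>{1..4}. (u k)\<^sup>2 = qedge A B C D k) \<and>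
     (\<forall>k\<in>{1..3}. sgn (Im (cnj (u k) * u (Suc k))) =
                  sgn (Im (cnj (qedge A B C D k) * qedge A B C D (Suc k))))"

definition vec_a :: "(nat \<Rightarrow> complex) \<Rightarrow> real^4" where
  "vec_a u = vector [Re (u 1), Re (u 2), Re (u 3), Re (u 4)]"

definition vec_b :: "(nat \<Rightarrow> complex) \<Rightarrow> real^4" where
  "vec_b u = vector [Im (u 1), Im (u 2), Im (u 3), Im (u 4)]"

definition orthonormal_basis_perp :: "real^4 \<Rightarrow> real^4 \<Rightarrow> real^4 \<Rightarrow> real^4 \<Rightarrow> bool" where
  "orthonormal_basis_perp a b c d \<longleftrightarrow>
     norm c = 1 \<and> norm d = 1 \<and> orthogonal c d \<and>
     span {c, d} = {x. orthogonal x a \<and> orthogonal x b}"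

definition dual_edge :: "real^4 \<Rightarrow> real^4 \<Rightarrow> 4 \<Rightarrow> complex" where
  "dual_edge c d k = (Complex (c $ k) (d $ k))\<^sup>2"

end

theory Submission
  imports Defs
begin

text \<open>
  Let t_k = Im (cnj z_k * z_(k+1)) be the turn at the k-th vertex. A non-degenerate
  quadrangle is neither convex nor self-intersecting exactly when t_1 t_2 t_3 t_4 < 0.
  With z_k = u_k^2 each turn factors as t_k = 2 Re (cnj u_k * u_(k+1)) Im (cnj u_k * u_(k+1)).
  The sign convention for the roots makes the first three real parts positive; the fourth
  is then negative, because four roots with positive consecutive real parts and an odd
  number of negative turns have squares that cannot sum to 0. Hence the product of the
  four imaginary parts is positive.

  The matrix with columns a, b, c, d is orthogonal. Orthonormality of its rows gives
  c_i c_j + d_i d_j = - Re (cnj u_i * u_j) for i \<noteq> j, and by Jacobi's complementary minor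
  identity every 2x2 minor of (c, d) is det times the complementary minor of (a, b), up to
  sign. So in the dual quadrangle the four real parts change sign while the product of the
  imaginary parts keeps its sign, and the product of the dual turns is again negative.
\<close>

section \<open>Turns and the shape of a quadrangle\<close>

abbreviation dot :: "complex \<Rightarrow> complex \<Rightarrow> real" where
  "dot v w \<equiv> Re (cnj v * w)"

abbreviation cross :: "complex \<Rightarrow> complex \<Rightarrow> real" where
  "cross v w \<equiv> Im (cnj v * w)"

lemma noncollinear_pair_iff_cross: "noncollinear_pair v w \<longleftrightarrow> cross v w \<noteq> 0"
proof
  assume "cross v w \<noteq> 0"
  then show "noncollinear_pair v w"
    by (auto simp: noncollinear_pair_def)
next
  assume nc: "noncollinear_pair v w"
  show "cross v w \<noteq> 0"
  proof
    assume "cross v w = 0"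
    then have real: "cnj v * w = of_real (dot v w)"
      by (simp add: complex_eq_iff)
    have "v \<noteq> 0"
      using nc by (simp add: noncollinear_pair_def)
    then have "w = (dot v w / (cmod v)\<^sup>2) *\<^sub>R v"
      using real complex_norm_square[of v]
      by (simp add: scaleR_conv_of_real field_simps)
    with nc show False
      by (auto simp: noncollinear_pair_def)
  qed
qed

definition orient :: "complex \<Rightarrow> complex \<Rightarrow> complex \<Rightarrow> real" where
  "orient P Q X = cross (Q - P) (X - P)"

lemma orient_convex_combination:
  "orient R S ((1 - t) *\<^sub>R P + t *\<^sub>R Q) = (1 - t) * orient R S P + t * orient R S Q"
  by (simp add: orient_def scaleR_conv_of_real algebra_simps)

lemma orient_on_line: "orient R S ((1 - t) *\<^sub>R R + t *\<^sub>R S) = 0"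
  by (simp add: orient_def scaleR_conv_of_real algebra_simps)

lemma convex_combination_zero_imp_opposite_signs:
  fixes g h t :: real
  assumes "(1 - t) * g + t * h = 0" "0 \<le> t" "t \<le> 1" "g \<noteq> 0" "h \<noteq> 0"
  shows "g * h < 0"
proof -
  have pos: "(1 - t) * g + t * h > 0" if "0 < g" "0 < h" for g h :: real
  proof -
    have "min g h = (1 - t) * min g h + t * min g h"
      by (simp add: algebra_simps)
    also have "\<dots> \<le> (1 - t) * g + t * h"
      using assms(2,3) by (intro add_mono mult_left_mono) auto
    finally show ?thesis
      using that by linarith
  qed
  have "\<not> (0 < g \<and> 0 < h)" "\<not> (0 < - g \<and> 0 < - h)"
    using assms(1) pos[of g h] pos[of "- g" "- h"] by auto
  with assms(4,5) show ?thesis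
    by (auto simp: mult_less_0_iff)
qed

lemma closed_segments_intersect_imp_opposite_sides:
  assumes "x \<in> closed_segment P Q" "x \<in> closed_segment R S"
    and "orient R S P \<noteq> 0" "orient R S Q \<noteq> 0"
  shows "orient R S P * orient R S Q < 0"
proof -
  obtain t where t: "0 \<le> t" "t \<le> 1" "x = (1 - t) *\<^sub>R P + t *\<^sub>R Q"
    using assms(1) in_segment(1) by blast
  obtain v where "x = (1 - v) *\<^sub>R R + v *\<^sub>R S"
    using assms(2) in_segment(1) by blast
  then have "(1 - t) * orient R S P + t * orient R S Q = 0"
    using t orient_on_line orient_convex_combination by metis
  with t assms show ?thesis
    using convex_combination_zero_imp_opposite_signs by blast
qed

lemma opposite_sides_imp_closed_segments_intersect:
  assumes PQ: "orient P Q R * orient P Q S < 0" and RS: "orient R S P * orient R S Q < 0"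
  shows "closed_segment P Q \<inter> closed_segment R S \<noteq> {}"
proof -
  define \<alpha> \<beta> \<gamma> \<delta> where "\<alpha> = orient P Q R" "\<beta> = orient P Q S" "\<gamma> = orient R S P" "\<delta> = orient R S Q"
  define t v where "t = \<gamma> / (\<gamma> - \<delta>)" "v = \<alpha> / (\<alpha> - \<beta>)"
  define X Y where "X = (1 - t) *\<^sub>R P + t *\<^sub>R Q" "Y = (1 - v) *\<^sub>R R + v *\<^sub>R S"
  have ratio_bounds: "0 \<le> g / (g - h) \<and> g / (g - h) \<le> 1" if "g * h < 0" for g h :: real
    using that by (auto simp: mult_less_0_iff divide_simps)
  have "\<gamma> \<noteq> \<delta>" "\<alpha> \<noteq> \<beta>"
    using PQ RS by (auto simp: \<alpha>_\<beta>_\<gamma>_\<delta>_def)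
  have sides: "\<alpha> - \<beta> = \<delta> - \<gamma>" "\<gamma> *\<^sub>R Q - \<delta> *\<^sub>R P = \<beta> *\<^sub>R R - \<alpha> *\<^sub>R S"
    by (simp_all add: \<alpha>_\<beta>_\<gamma>_\<delta>_def orient_def complex_eq_iff algebra_simps)
  have coeffs: "(\<gamma> - \<delta>) * (1 - t) = - \<delta>" "(\<gamma> - \<delta>) * t = \<gamma>"
    "(\<alpha> - \<beta>) * (1 - v) = - \<beta>" "(\<alpha> - \<beta>) * v = \<alpha>"
    using \<open>\<gamma> \<noteq> \<delta>\<close> \<open>\<alpha> \<noteq> \<beta>\<close> by (simp_all add: t_v_def field_simps)
  have "(\<gamma> - \<delta>) *\<^sub>R X = \<gamma> *\<^sub>R Q - \<delta> *\<^sub>R P" "(\<alpha> - \<beta>) *\<^sub>R Y = \<alpha> *\<^sub>R S - \<beta> *\<^sub>R R"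
    unfolding X_Y_def scaleR_add_right scaleR_scaleR coeffs by simp_all
  then have "(\<gamma> - \<delta>) *\<^sub>R X = (\<gamma> - \<delta>) *\<^sub>R Y"
    using sides by (metis minus_diff_eq scaleR_minus_left)
  then have "X = Y"
    using \<open>\<gamma> \<noteq> \<delta>\<close> by simp
  moreover have "X \<in> closed_segment P Q"
    using ratio_bounds[OF RS] by (auto simp: in_segment X_Y_def t_v_def \<alpha>_\<beta>_\<gamma>_\<delta>_def)
  moreover have "Y \<in> closed_segment R S"
    using ratio_bounds[OF PQ] by (auto simp: in_segment X_Y_def t_v_def \<alpha>_\<beta>_\<gamma>_\<delta>_def)
  ultimately show ?thesis
    by auto
qed

lemma closed_segments_intersect_iff:
  assumes "orient R S P \<noteq> 0" "orient R S Q \<noteq> 0" "orient P Q R \<noteq> 0" "orient P Q S \<noteq> 0"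
  shows "closed_segment P Q \<inter> closed_segment R S \<noteq> {} \<longleftrightarrow>
    orient P Q R * orient P Q S < 0 \<and> orient R S P * orient R S Q < 0"
  using assms closed_segments_intersect_imp_opposite_sides[of _ P Q R S]
    closed_segments_intersect_imp_opposite_sides[of _ R S P Q]
    opposite_sides_imp_closed_segments_intersect[of P Q R S]
  by blast

definition turn :: "complex \<Rightarrow> complex \<Rightarrow> complex \<Rightarrow> complex \<Rightarrow> nat \<Rightarrow> real" where
  "turn A B C D k = cross (qedge A B C D k) (qedge A B C D (nxt k))"

lemma qedge_simps [simp]:
  "qedge A B C D 1 = B - A" "qedge A B C D (Suc 0) = B - A" "qedge A B C D 2 = C - B"
  "qedge A B C D 3 = D - C" "qedge A B C D 4 = A - D"
  by (simp_all add: qedge_def)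

lemma nxt_simps [simp]: "nxt 1 = 2" "nxt (Suc 0) = 2" "nxt 2 = 3" "nxt 3 = 4" "nxt 4 = 1"
  by (simp_all add: nxt_def)

lemma atLeastAtMost_1_4_nat: "{1..4::nat} = {1, 2, 3, 4}"
  by auto

lemma nondegenerate_iff_turns:
  "nondegenerate A B C D \<longleftrightarrow>
    turn A B C D 1 \<noteq> 0 \<and> turn A B C D 2 \<noteq> 0 \<and> turn A B C D 3 \<noteq> 0 \<and> turn A B C D 4 \<noteq> 0"
  unfolding nondegenerate_def atLeastAtMost_1_4_nat noncollinear_pair_iff_cross
  by (simp only: ball_simps simp_thms turn_def[symmetric])

lemma orient_eq_turn:
  "orient A B C = turn A B C D 1" "orient A B D = turn A B C D 4"
  "orient C D A = turn A B C D 3" "orient C D B = turn A B C D 2"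
  "orient B C D = turn A B C D 2" "orient B C A = turn A B C D 1"
  "orient D A B = turn A B C D 4" "orient D A C = turn A B C D 3"
  by (simp_all add: orient_def turn_def algebra_simps)

lemma self_intersecting_iff_turns:
  assumes "nondegenerate A B C D"
  shows "self_intersecting A B C D \<longleftrightarrow>
    (turn A B C D 1 * turn A B C D 4 < 0 \<and> turn A B C D 3 * turn A B C D 2 < 0) \<or>
    (turn A B C D 2 * turn A B C D 1 < 0 \<and> turn A B C D 4 * turn A B C D 3 < 0)"
proof -
  have "turn A B C D 1 \<noteq> 0" "turn A B C D 2 \<noteq> 0" "turn A B C D 3 \<noteq> 0" "turn A B C D 4 \<noteq> 0"
    using assms by (simp_all add: nondegenerate_iff_turns)
  then show ?thesis
    using assms closed_segments_intersect_iff[of C D A B] closed_segments_intersect_iff[of D A B C]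
    by (simp add: self_intersecting_def orient_eq_turn[where A = A and B = B and C = C and D = D])
qed

lemma signed_area_eq_turns: "signed_area A B C D = (turn A B C D 1 + turn A B C D 3) / 2"
  by (simp add: signed_area_def turn_def algebra_simps)

lemma interior_angle_less_pi_iff:
  assumes "turn A B C D k \<noteq> 0"
  shows "interior_angle A B C D k < pi \<longleftrightarrow> signed_area A B C D * turn A B C D k > 0"
proof -
  define z w where "z = qedge A B C D k" "w = qedge A B C D (nxt k)"
  have "z \<noteq> 0"
    using assms by (auto simp: turn_def z_w_def)
  then have "Im (w / z) = turn A B C D k / (cmod z)\<^sup>2"
    by (simp add: turn_def z_w_def Im_divide cmod_power2 algebra_simps)
  moreover have "(cmod z)\<^sup>2 > 0"
    using \<open>z \<noteq> 0\<close> by simp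
  ultimately have "Arg (w / z) > 0 \<longleftrightarrow> turn A B C D k > 0" "Arg (w / z) < 0 \<longleftrightarrow> turn A B C D k < 0"
    using assms by (auto simp: Arg_pos_iff Arg_neg_iff zero_less_divide_iff divide_less_0_iff)
  then show ?thesis
    by (cases "signed_area A B C D" rule: linorder_cases)
      (auto simp: interior_angle_def z_w_def zero_less_mult_iff mult_less_0_iff)
qed

lemma turn_signs_nonconvex_iff:
  fixes s1 s2 s3 s4 :: real
  assumes "s1 \<noteq> 0" "s2 \<noteq> 0" "s3 \<noteq> 0" "s4 \<noteq> 0"
  shows "\<not> ((s1 * s4 < 0 \<and> s3 * s2 < 0) \<or> (s2 * s1 < 0 \<and> s4 * s3 < 0)) \<and>
      \<not> ((s1 + s3) / 2 * s1 > 0 \<and> (s1 + s3) / 2 * s2 > 0 \<and> (s1 + s3) / 2 * s3 > 0 \<and> (s1 + s3) / 2 * s4 > 0)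
    \<longleftrightarrow> s1 * s2 * s3 * s4 < 0"
proof -
  have "(s1 > 0 \<or> s1 < 0) \<and> (s2 > 0 \<or> s2 < 0) \<and> (s3 > 0 \<or> s3 < 0) \<and> (s4 > 0 \<or> s4 < 0)"
    using assms by auto
  then show ?thesis
    by (elim conjE disjE) (simp_all add: mult_less_0_iff zero_less_mult_iff)
qed

lemma nonconvex_quad_iff_turns:
  "nonconvex_quad A B C D \<longleftrightarrow> turn A B C D 1 * turn A B C D 2 * turn A B C D 3 * turn A B C D 4 < 0"
proof (cases "nondegenerate A B C D")
  case False
  then show ?thesis
    by (auto simp: nonconvex_quad_def nondegenerate_iff_turns)
next
  case True
  then have nz: "turn A B C D 1 \<noteq> 0" "turn A B C D 2 \<noteq> 0" "turn A B C D 3 \<noteq> 0" "turn A B C D 4 \<noteq> 0"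
    by (simp_all add: nondegenerate_iff_turns)
  then have angles: "(\<forall>k\<in>{1..4}. interior_angle A B C D k < pi) \<longleftrightarrow>
      ((turn A B C D 1 + turn A B C D 3) / 2 * turn A B C D 1 > 0 \<and>
       (turn A B C D 1 + turn A B C D 3) / 2 * turn A B C D 2 > 0 \<and>
       (turn A B C D 1 + turn A B C D 3) / 2 * turn A B C D 3 > 0 \<and>
       (turn A B C D 1 + turn A B C D 3) / 2 * turn A B C D 4 > 0)"
    unfolding atLeastAtMost_1_4_nat ball_simps
    by (simp only: interior_angle_less_pi_iff signed_area_eq_turns simp_thms)
  then have "nonconvex_quad A B C D \<longleftrightarrow>
      \<not> self_intersecting A B C D \<and>
      \<not> ((turn A B C D 1 + turn A B C D 3) / 2 * turn A B C D 1 > 0 \<and>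
         (turn A B C D 1 + turn A B C D 3) / 2 * turn A B C D 2 > 0 \<and>
         (turn A B C D 1 + turn A B C D 3) / 2 * turn A B C D 3 > 0 \<and>
         (turn A B C D 1 + turn A B C D 3) / 2 * turn A B C D 4 > 0)"
    using True by (auto simp only: nonconvex_quad_def convex_quad_def simp_thms)
  also have "\<dots> \<longleftrightarrow> turn A B C D 1 * turn A B C D 2 * turn A B C D 3 * turn A B C D 4 < 0"
    unfolding self_intersecting_iff_turns[OF True]
    by (rule turn_signs_nonconvex_iff[OF nz])
  finally show ?thesis .
qed

section \<open>Squares of the edge roots\<close>

lemma cross_power2: "cross (u\<^sup>2) (v\<^sup>2) = 2 * dot u v * cross u v"
  by (simp add: power2_eq_square algebra_simps)

lemma between_in_first_quadrant:
  fixes p q z :: complex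
  assumes "Re p > 0" "Im p > 0" "Re q > 0" "Im q > 0"
    and "dot p z > 0" "cross p z > 0" "dot z q > 0" "cross z q > 0"
  shows "Re z > 0 \<and> Im z > 0"
proof -
  have decomp: "cross p q *\<^sub>R z = cross z q *\<^sub>R p + cross p z *\<^sub>R q"
    by (simp add: complex_eq_iff algebra_simps)
  have "cross p q * (cmod z)\<^sup>2 = cross z q * dot p z + cross p z * dot z q"
    unfolding cmod_power2 by (simp add: power2_eq_square algebra_simps)
  also have "\<dots> > 0"
    using assms(5-8) by (intro add_pos_pos mult_pos_pos)
  finally have "cross p q > 0"
    by (simp add: zero_less_mult_iff)
  moreover have "Re (cross p q *\<^sub>R z) = cross z q * Re p + cross p z * Re q"
    "Im (cross p q *\<^sub>R z) = cross z q * Im p + cross p z * Im q"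
    unfolding decomp by simp_all
  then have "Re (cross p q *\<^sub>R z) > 0" "Im (cross p q *\<^sub>R z) > 0"
    using assms by (simp_all only: add_pos_pos mult_pos_pos)
  ultimately show ?thesis
    by (simp add: zero_less_mult_iff)
qed

lemma dot_commute: "dot v w = dot w v"
  by (simp add: mult.commute)

lemma cross_swap: "cross v w = - cross w v"
  by (simp add: mult.commute)

lemma dot_cross_rotate:
  "dot (cnj a * v) (cnj a * w) = (cmod a)\<^sup>2 * dot v w"
  "cross (cnj a * v) (cnj a * w) = (cmod a)\<^sup>2 * cross v w"
  unfolding cmod_power2 by (simp_all add: power2_eq_square algebra_simps)

lemma sum_power2_ne_zero_last_turn_negative:
  fixes u1 u2 u3 u4 :: complex
  assumes dots: "dot u1 u2 > 0" "dot u2 u3 > 0" "dot u3 u4 > 0" "dot u4 u1 > 0"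
    and crosses: "cross u1 u2 > 0" "cross u2 u3 > 0" "cross u3 u4 > 0" "cross u4 u1 < 0"
  shows "u1\<^sup>2 + u2\<^sup>2 + u3\<^sup>2 + u4\<^sup>2 \<noteq> 0"
proof
  assume sum: "u1\<^sup>2 + u2\<^sup>2 + u3\<^sup>2 + u4\<^sup>2 = 0"
  define q2 q3 q4 where "q2 = cnj u1 * u2" "q3 = cnj u1 * u3" "q4 = cnj u1 * u4"
  have "(cmod u1)\<^sup>2 > 0"
    using dots(1) by auto
  have q2: "Re q2 > 0" "Im q2 > 0"
    using dots(1) crosses(1) by (simp_all only: q2_q3_q4_def)
  have q4: "Re q4 > 0" "Im q4 > 0"
    using dots(4) crosses(4)
    by (simp_all only: q2_q3_q4_def dot_commute[of u1 u4] cross_swap[of u1 u4] neg_0_less_iff_less)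
  have "dot q2 q3 > 0" "cross q2 q3 > 0" "dot q3 q4 > 0" "cross q3 q4 > 0"
    using \<open>(cmod u1)\<^sup>2 > 0\<close> dots(2,3) crosses(2,3)
    by (simp_all only: q2_q3_q4_def dot_cross_rotate mult_pos_pos)
  then have q3: "Re q3 > 0 \<and> Im q3 > 0"
    using between_in_first_quadrant[OF q2 q4] by blast
  \<comment> \<open>After rotating by \<open>cnj u1\<close> the first square is real and the others lie in the upper half plane.\<close>
  have "(cnj u1)\<^sup>2 * (u1\<^sup>2 + u2\<^sup>2 + u3\<^sup>2 + u4\<^sup>2) = (cnj u1 * u1)\<^sup>2 + q2\<^sup>2 + q3\<^sup>2 + q4\<^sup>2"
    by (simp add: q2_q3_q4_def power2_eq_square algebra_simps)
  then have "Im ((cnj u1)\<^sup>2 * (u1\<^sup>2 + u2\<^sup>2 + u3\<^sup>2 + u4\<^sup>2)) = 2 * (Re q2 * Im q2 + Re q3 * Im q3 + Re q4 * Im q4)"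
    by (simp add: power2_eq_square algebra_simps)
  also have "\<dots> > 0"
    using q2 q3 q4 by (simp add: add_pos_pos)
  finally show False
    using sum by simp
qed

lemma dot_cross_cnj: "dot (cnj v) (cnj w) = dot v w" "cross (cnj v) (cnj w) = - cross v w"
  by (simp_all add: mult.commute)

lemma sum_power2_ne_zero_last_turn_opposite:
  fixes u1 u2 u3 u4 :: complex
  assumes dots: "dot u1 u2 > 0" "dot u2 u3 > 0" "dot u3 u4 > 0" "dot u4 u1 > 0"
    and "cross u1 u2 * cross u2 u3 > 0" "cross u2 u3 * cross u3 u4 > 0" "cross u3 u4 * cross u4 u1 < 0"
  shows "u1\<^sup>2 + u2\<^sup>2 + u3\<^sup>2 + u4\<^sup>2 \<noteq> 0"
proof -
  have signs: "0 < x2 \<and> 0 < x3 \<and> x4 < 0"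
    if "0 < x1" "x1 * x2 > 0" "x2 * x3 > 0" "x3 * x4 < 0" for x1 x2 x3 x4 :: real
    using that by (auto simp: zero_less_mult_iff mult_less_0_iff)
  consider "cross u1 u2 > 0" | "- cross u1 u2 > 0"
    using assms(5) by (cases "cross u1 u2 > 0") (auto simp: zero_less_mult_iff)
  then show ?thesis
  proof cases
    case 1
    with signs[OF 1 assms(5-7)] show ?thesis
      using sum_power2_ne_zero_last_turn_negative[OF dots] by blast
  next
    case 2
    have "(cnj u1)\<^sup>2 + (cnj u2)\<^sup>2 + (cnj u3)\<^sup>2 + (cnj u4)\<^sup>2 \<noteq> 0"
      using signs[OF 2, of "- cross u2 u3" "- cross u3 u4" "- cross u4 u1"] assms(5-7) 2
      by (intro sum_power2_ne_zero_last_turn_negative)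
        (simp_all only: dot_cross_cnj dots mult_minus_left mult_minus_right minus_minus simp_thms)
    then show ?thesis
      by (metis complex_cnj_add complex_cnj_power complex_cnj_zero)
  qed
qed

lemma sum_power2_ne_zero:
  fixes u1 u2 u3 u4 :: complex
  assumes dots: "dot u1 u2 > 0" "dot u2 u3 > 0" "dot u3 u4 > 0" "dot u4 u1 > 0"
    and crosses: "cross u1 u2 * cross u2 u3 * cross u3 u4 * cross u4 u1 < 0"
  shows "u1\<^sup>2 + u2\<^sup>2 + u3\<^sup>2 + u4\<^sup>2 \<noteq> 0"
proof -
  have odd_one_out: "(x1 * x2 > 0 \<and> x2 * x3 > 0 \<and> x3 * x4 < 0) \<or> (x2 * x3 > 0 \<and> x3 * x4 > 0 \<and> x4 * x1 < 0) \<or>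
      (x3 * x4 > 0 \<and> x4 * x1 > 0 \<and> x1 * x2 < 0) \<or> (x4 * x1 > 0 \<and> x1 * x2 > 0 \<and> x2 * x3 < 0)"
    if "x1 * x2 * x3 * x4 < 0" for x1 x2 x3 x4 :: real
  proof -
    have "x1 \<noteq> 0" "x2 \<noteq> 0" "x3 \<noteq> 0" "x4 \<noteq> 0"
      using that by auto
    then have "(x1 > 0 \<or> x1 < 0) \<and> (x2 > 0 \<or> x2 < 0) \<and> (x3 > 0 \<or> x3 < 0) \<and> (x4 > 0 \<or> x4 < 0)"
      by auto
    then show ?thesis
      using that by (elim conjE disjE) (simp_all add: mult_less_0_iff zero_less_mult_iff)
  qed
  have "u1\<^sup>2 + u2\<^sup>2 + u3\<^sup>2 + u4\<^sup>2 = u2\<^sup>2 + u3\<^sup>2 + u4\<^sup>2 + u1\<^sup>2"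
    "u1\<^sup>2 + u2\<^sup>2 + u3\<^sup>2 + u4\<^sup>2 = u3\<^sup>2 + u4\<^sup>2 + u1\<^sup>2 + u2\<^sup>2"
    "u1\<^sup>2 + u2\<^sup>2 + u3\<^sup>2 + u4\<^sup>2 = u4\<^sup>2 + u1\<^sup>2 + u2\<^sup>2 + u3\<^sup>2"
    by (simp_all add: algebra_simps)
  with odd_one_out[OF crosses] dots show ?thesis
    using sum_power2_ne_zero_last_turn_opposite[of u1 u2 u3 u4] sum_power2_ne_zero_last_turn_opposite[of u2 u3 u4 u1]
      sum_power2_ne_zero_last_turn_opposite[of u3 u4 u1 u2] sum_power2_ne_zero_last_turn_opposite[of u4 u1 u2 u3]
    by metis
qed

lemma turn_eq_roots:
  assumes roots: "\<And>k. k \<in> {1..4} \<Longrightarrow> (u k)\<^sup>2 = qedge A B C D k" and "k \<in> {1..4}"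
  shows "turn A B C D k = 2 * dot (u k) (u (nxt k)) * cross (u k) (u (nxt k))"
proof -
  have "nxt k \<in> {1..4}"
    using assms(2) by (auto simp: nxt_def)
  show ?thesis
    unfolding turn_def roots[OF assms(2), symmetric] roots[OF \<open>nxt k \<in> {1..4}\<close>, symmetric]
    by (rule cross_power2)
qed

lemma pos_if_sgn_eq_sgn_mult:
  fixes R P :: real
  assumes "sgn P = sgn (2 * R * P)" "P \<noteq> 0"
  shows "R > 0"
proof -
  have "sgn P = sgn R * sgn P"
    using assms(1) by (simp add: sgn_mult)
  then show ?thesis
    using assms(2) by (simp add: sgn_zero_iff sgn_1_pos)
qed

lemma admissible_roots_dot_pos:
  assumes "nondegenerate A B C D" "admissible_roots A B C D u" "k \<in> {1..3}"
  shows "dot (u k) (u (nxt k)) > 0"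
proof (rule pos_if_sgn_eq_sgn_mult)
  have roots: "(u j)\<^sup>2 = qedge A B C D j" if "j \<in> {1..4}" for j
    using assms(2) that by (simp add: admissible_roots_def)
  have "k \<in> {1..4}"
    using assms(3) by simp
  have "sgn (cross (u k) (u (nxt k))) = sgn (turn A B C D k)"
    using assms(2,3) by (auto simp: admissible_roots_def turn_def nxt_def)
  then show "sgn (cross (u k) (u (nxt k))) = sgn (2 * dot (u k) (u (nxt k)) * cross (u k) (u (nxt k)))"
    by (simp only: turn_eq_roots[OF roots \<open>k \<in> {1..4}\<close>])
  have "k = 1 \<or> k = 2 \<or> k = 3"
    using assms(3) by auto
  then have "turn A B C D k \<noteq> 0"
    using assms(1) by (auto simp: nondegenerate_iff_turns)
  then show "cross (u k) (u (nxt k)) \<noteq> 0"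
    by (metis mult_zero_right turn_eq_roots[OF roots \<open>k \<in> {1..4}\<close>])
qed

lemma admissible_roots_dot_signs:
  assumes "nonconvex_quad A B C D" and "admissible_roots A B C D u"
  shows "dot (u 1) (u 2) > 0" "dot (u 2) (u 3) > 0" "dot (u 3) (u 4) > 0" "dot (u 4) (u 1) < 0"
    and "cross (u 1) (u 2) * cross (u 2) (u 3) * cross (u 3) (u 4) * cross (u 4) (u 1) > 0"
proof -
  define R1 R2 R3 R4 where
    "R1 = dot (u 1) (u 2)" "R2 = dot (u 2) (u 3)" "R3 = dot (u 3) (u 4)" "R4 = dot (u 4) (u 1)"
  define P1 P2 P3 P4 where
    "P1 = cross (u 1) (u 2)" "P2 = cross (u 2) (u 3)" "P3 = cross (u 3) (u 4)" "P4 = cross (u 4) (u 1)"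
  have roots: "(u k)\<^sup>2 = qedge A B C D k" if "k \<in> {1..4}" for k
    using assms(2) that by (simp add: admissible_roots_def)
  have turns: "turn A B C D 1 = 2 * R1 * P1" "turn A B C D 2 = 2 * R2 * P2"
    "turn A B C D 3 = 2 * R3 * P3" "turn A B C D 4 = 2 * R4 * P4"
    using turn_eq_roots[of u A B C D, OF roots] by (simp_all add: R1_R2_R3_R4_def P1_P2_P3_P4_def)
  have "turn A B C D 1 * turn A B C D 2 * turn A B C D 3 * turn A B C D 4 < 0"
    using assms(1) by (simp add: nonconvex_quad_iff_turns)
  then have prod: "16 * (R1 * R2 * R3 * R4) * (P1 * P2 * P3 * P4) < 0"
    unfolding turns by (simp add: mult_ac)
  have product_signs: "X > 0 \<Longrightarrow> Y < 0" "X < 0 \<Longrightarrow> Y > 0" if "16 * X * Y < 0" for X Y :: real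
    using that by (simp_all add: mult_less_0_iff zero_less_mult_iff)
  have "nondegenerate A B C D"
    using assms(1) by (simp add: nonconvex_quad_def)
  then have "R1 > 0" "R2 > 0" "R3 > 0"
    using admissible_roots_dot_pos[OF _ assms(2), of 1] admissible_roots_dot_pos[OF _ assms(2), of 2]
      admissible_roots_dot_pos[OF _ assms(2), of 3]
    by (simp_all add: R1_R2_R3_R4_def)
  moreover have "R4 < 0"
  proof (rule ccontr)
    assume "\<not> R4 < 0"
    moreover have "R4 \<noteq> 0"
      using prod by auto
    ultimately have "R4 > 0"
      by simp
    with \<open>R1 > 0\<close> \<open>R2 > 0\<close> \<open>R3 > 0\<close> have "R1 * R2 * R3 * R4 > 0"
      by simp
    with prod have "P1 * P2 * P3 * P4 < 0"
      by (rule product_signs)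
    with \<open>R1 > 0\<close> \<open>R2 > 0\<close> \<open>R3 > 0\<close> \<open>R4 > 0\<close>
    have "(u 1)\<^sup>2 + (u 2)\<^sup>2 + (u 3)\<^sup>2 + (u 4)\<^sup>2 \<noteq> 0"
      unfolding R1_R2_R3_R4_def P1_P2_P3_P4_def by (rule sum_power2_ne_zero)
    moreover have "(u 1)\<^sup>2 + (u 2)\<^sup>2 + (u 3)\<^sup>2 + (u 4)\<^sup>2 = 0"
      using roots by simp
    ultimately show False ..
  qed
  moreover have "R1 * R2 * R3 * R4 < 0"
    using \<open>R1 > 0\<close> \<open>R2 > 0\<close> \<open>R3 > 0\<close> \<open>R4 < 0\<close> by (simp add: mult_pos_neg)
  with prod have "P1 * P2 * P3 * P4 > 0"
    by (rule product_signs)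
  ultimately show "dot (u 1) (u 2) > 0" "dot (u 2) (u 3) > 0" "dot (u 3) (u 4) > 0" "dot (u 4) (u 1) < 0"
    and "cross (u 1) (u 2) * cross (u 2) (u 3) * cross (u 3) (u 4) * cross (u 4) (u 1) > 0"
    unfolding R1_R2_R3_R4_def P1_P2_P3_P4_def .
qed

section \<open>Orthonormal frames of \<open>\<real>\<^sup>4\<close>\<close>

lemma vector_4 [simp]:
  "(vector [x1, x2, x3, x4] :: 'a::zero^4) $ 1 = x1" "(vector [x1, x2, x3, x4] :: 'a^4) $ 2 = x2"
  "(vector [x1, x2, x3, x4] :: 'a^4) $ 3 = x3" "(vector [x1, x2, x3, x4] :: 'a^4) $ 4 = x4"
  by (simp_all add: vector_def)

definition orthonormal_frame :: "real^4 \<Rightarrow> real^4 \<Rightarrow> real^4 \<Rightarrow> real^4 \<Rightarrow> bool" where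
  "orthonormal_frame a b c d \<longleftrightarrow>
     norm a = 1 \<and> norm b = 1 \<and> norm c = 1 \<and> norm d = 1 \<and>
     orthogonal a b \<and> orthogonal a c \<and> orthogonal a d \<and>
     orthogonal b c \<and> orthogonal b d \<and> orthogonal c d"

lemma orthonormal_frame_rows:
  assumes "orthonormal_frame a b c d"
  shows "a$i * a$l + b$i * b$l + c$i * c$l + d$i * d$l = (if i = l then 1 else 0)"
proof -
  define M :: "real^4^4" where "M = vector [a, b, c, d]"
  have "orthogonal_matrix M"
    unfolding orthogonal_matrix_orthonormal_rows using assms
    by (auto simp: orthonormal_frame_def M_def row_def forall_4 orthogonal_commute vec_lambda_eta)
  then have "column i M \<bullet> column l M = (if i = l then 1 else 0)"
    by (auto simp: orthogonal_matrix_orthonormal_columns orthogonal_def norm_eq_1)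
  then show ?thesis
    by (simp add: M_def column_def inner_vec_def sum_4)
qed

definition minor2 :: "real^4 \<Rightarrow> real^4 \<Rightarrow> 4 \<Rightarrow> 4 \<Rightarrow> real" where
  "minor2 x y i j = x$i * y$j - x$j * y$i"

text \<open>Laplace expansion along the first two columns of the determinant with columns a, b, x, y.\<close>
definition det4_cols :: "real^4 \<Rightarrow> real^4 \<Rightarrow> real^4 \<Rightarrow> real^4 \<Rightarrow> real" where
  "det4_cols a b x y =
     minor2 a b 1 2 * minor2 x y 3 4 - minor2 a b 1 3 * minor2 x y 2 4 + minor2 a b 1 4 * minor2 x y 2 3
   + minor2 a b 2 3 * minor2 x y 1 4 - minor2 a b 2 4 * minor2 x y 1 3 + minor2 a b 3 4 * minor2 x y 1 2"

lemma det4_cols_combination: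
  "det4_cols a b (\<alpha> *\<^sub>R a + \<beta> *\<^sub>R b + \<gamma> *\<^sub>R c + \<delta> *\<^sub>R d)
      (\<alpha>' *\<^sub>R a + \<beta>' *\<^sub>R b + \<gamma>' *\<^sub>R c + \<delta>' *\<^sub>R d)
    = (\<gamma> * \<delta>' - \<delta> * \<gamma>') * det4_cols a b c d"
  unfolding det4_cols_def minor2_def by simp algebra

lemma det4_cols_mult_minor2:
  fixes a b c d :: "real^4"
  assumes rows: "\<And>i l. a$i * a$l + b$i * b$l + c$i * c$l + d$i * d$l = (if i = l then 1 else 0)"
  shows "det4_cols a b c d * minor2 c d i j = det4_cols a b (axis i 1) (axis j 1)"
proof -
  have "axis i 1 = a$i *\<^sub>R a + b$i *\<^sub>R b + c$i *\<^sub>R c + d$i *\<^sub>R d" for i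
    using rows by (auto simp: vec_eq_iff axis_def)
  then show ?thesis
    by (simp only: det4_cols_combination minor2_def mult.commute)
qed

lemma complementary_minor2:
  fixes a b c d :: "real^4"
  assumes rows: "\<And>i l. a$i * a$l + b$i * b$l + c$i * c$l + d$i * d$l = (if i = l then 1 else 0)"
  shows "det4_cols a b c d * minor2 c d 1 2 = minor2 a b 3 4"
    "det4_cols a b c d * minor2 c d 2 3 = minor2 a b 1 4"
    "det4_cols a b c d * minor2 c d 3 4 = minor2 a b 1 2"
    "det4_cols a b c d * minor2 c d 4 1 = - minor2 a b 2 3"
  unfolding det4_cols_mult_minor2[OF rows] by (simp_all add: det4_cols_def minor2_def axis_def)

lemma cyclic_minor2_prod_pos:
  fixes a b c d :: "real^4"
  assumes rows: "\<And>i l. a$i * a$l + b$i * b$l + c$i * c$l + d$i * d$l = (if i = l then 1 else 0)"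
    and pos: "minor2 a b 1 2 * minor2 a b 2 3 * minor2 a b 3 4 * minor2 a b 4 1 > 0"
  shows "minor2 c d 1 2 * minor2 c d 2 3 * minor2 c d 3 4 * minor2 c d 4 1 > 0"
proof -
  define \<epsilon> where "\<epsilon> = det4_cols a b c d"
  have "\<epsilon> ^ 4 * (minor2 c d 1 2 * minor2 c d 2 3 * minor2 c d 3 4 * minor2 c d 4 1) =
      (\<epsilon> * minor2 c d 1 2) * (\<epsilon> * minor2 c d 2 3) * (\<epsilon> * minor2 c d 3 4) * (\<epsilon> * minor2 c d 4 1)"
    by (simp add: power4_eq_xxxx mult_ac)
  also have "\<dots> = minor2 a b 1 2 * minor2 a b 2 3 * minor2 a b 3 4 * minor2 a b 4 1"
    unfolding \<epsilon>_def complementary_minor2[OF rows] by (simp add: minor2_def algebra_simps)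
  finally have "\<epsilon> ^ 4 * (minor2 c d 1 2 * minor2 c d 2 3 * minor2 c d 3 4 * minor2 c d 4 1) > 0"
    using pos by simp
  moreover have "\<epsilon> ^ 4 \<ge> 0"
    by simp
  ultimately show ?thesis
    by (metis mult_nonneg_nonpos not_less)
qed

section \<open>The dual quadrangle\<close>

lemma admissible_roots_orthonormal_frame:
  assumes "perimeter A B C D = 2" "admissible_roots A B C D u"
    and "orthonormal_basis_perp (vec_a u) (vec_b u) c d"
  shows "orthonormal_frame (vec_a u) (vec_b u) c d"
proof -
  have roots: "(u 1)\<^sup>2 = B - A" "(u 2)\<^sup>2 = C - B" "(u 3)\<^sup>2 = D - C" "(u 4)\<^sup>2 = A - D"
    using assms(2) by (auto simp: admissible_roots_def atLeastAtMost_1_4_nat)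
  have "cmod ((u 1)\<^sup>2) + cmod ((u 2)\<^sup>2) + cmod ((u 3)\<^sup>2) + cmod ((u 4)\<^sup>2) = 2"
    using assms(1) roots unfolding perimeter_def atLeastAtMost_1_4_nat by simp
  then have "(\<Sum>k\<in>{1,2,3,4}. (Re (u k))\<^sup>2 + (Im (u k))\<^sup>2) = 2"
    by (simp add: norm_power cmod_power2)
  moreover have "(\<Sum>k\<in>{1,2,3,4}. (u k)\<^sup>2) = 0"
    using roots by simp
  then have "(\<Sum>k\<in>{1,2,3,4}. (Re (u k))\<^sup>2 - (Im (u k))\<^sup>2) = 0" "(\<Sum>k\<in>{1,2,3,4}. Re (u k) * Im (u k)) = 0"
    by (simp_all add: complex_eq_iff power2_eq_square algebra_simps)
  ultimately have "vec_a u \<bullet> vec_a u = 1" "vec_b u \<bullet> vec_b u = 1" "vec_a u \<bullet> vec_b u = 0"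
    by (simp_all add: vec_a_def vec_b_def inner_vec_def sum_4 power2_eq_square algebra_simps)
  moreover have "c \<in> span {c, d}" "d \<in> span {c, d}"
    by (simp_all add: span_base)
  then have "orthogonal c (vec_a u)" "orthogonal c (vec_b u)" "orthogonal d (vec_a u)" "orthogonal d (vec_b u)"
    using assms(3) unfolding orthonormal_basis_perp_def by blast+
  ultimately show ?thesis
    using assms(3)
    by (simp add: orthonormal_frame_def orthonormal_basis_perp_def norm_eq_1 orthogonal_commute)
      (simp add: orthogonal_def)
qed

lemma dual_turns:
  assumes "L - K = dual_edge c d 1" "M - L = dual_edge c d 2" "N - M = dual_edge c d 3" "K - N = dual_edge c d 4"
  shows "turn K L M N 1 = 2 * (c$1 * c$2 + d$1 * d$2) * minor2 c d 1 2"
    "turn K L M N 2 = 2 * (c$2 * c$3 + d$2 * d$3) * minor2 c d 2 3"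
    "turn K L M N 3 = 2 * (c$3 * c$4 + d$3 * d$4) * minor2 c d 3 4"
    "turn K L M N 4 = 2 * (c$4 * c$1 + d$4 * d$1) * minor2 c d 4 1"
proof -
  have "qedge K L M N 1 = (Complex (c$1) (d$1))\<^sup>2" "qedge K L M N 2 = (Complex (c$2) (d$2))\<^sup>2"
    "qedge K L M N 3 = (Complex (c$3) (d$3))\<^sup>2" "qedge K L M N 4 = (Complex (c$4) (d$4))\<^sup>2"
    using assms by (simp_all add: dual_edge_def)
  then show "turn K L M N 1 = 2 * (c$1 * c$2 + d$1 * d$2) * minor2 c d 1 2"
    "turn K L M N 2 = 2 * (c$2 * c$3 + d$2 * d$3) * minor2 c d 2 3"
    "turn K L M N 3 = 2 * (c$3 * c$4 + d$3 * d$4) * minor2 c d 3 4"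
    "turn K L M N 4 = 2 * (c$4 * c$1 + d$4 * d$1) * minor2 c d 4 1"
    unfolding turn_def nxt_simps by (simp_all only: cross_power2) (simp_all add: minor2_def)
qed

lemma minor2_vec_a_vec_b:
  "minor2 (vec_a u) (vec_b u) 1 2 = cross (u 1) (u 2)" "minor2 (vec_a u) (vec_b u) 2 3 = cross (u 2) (u 3)"
  "minor2 (vec_a u) (vec_b u) 3 4 = cross (u 3) (u 4)" "minor2 (vec_a u) (vec_b u) 4 1 = cross (u 4) (u 1)"
  by (simp_all add: minor2_def vec_a_def vec_b_def mult.commute)

lemma orthonormal_frame_dual_dots:
  assumes "orthonormal_frame (vec_a u) (vec_b u) c d"
  shows "c$1 * c$2 + d$1 * d$2 = - dot (u 1) (u 2)" "c$2 * c$3 + d$2 * d$3 = - dot (u 2) (u 3)"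
    "c$3 * c$4 + d$3 * d$4 = - dot (u 3) (u 4)" "c$4 * c$1 + d$4 * d$1 = - dot (u 4) (u 1)"
  using orthonormal_frame_rows[OF assms, of 1 2] orthonormal_frame_rows[OF assms, of 2 3]
    orthonormal_frame_rows[OF assms, of 3 4] orthonormal_frame_rows[OF assms, of 4 1]
  by (simp_all add: vec_a_def vec_b_def)

theorem theorem5p1:
  fixes A B C D K L M N :: complex and u :: "nat \<Rightarrow> complex" and c d :: "real^4"
  assumes "nonconvex_quad A B C D"
    and "perimeter A B C D = 2"
    and "admissible_roots A B C D u"
    and "orthonormal_basis_perp (vec_a u) (vec_b u) c d"
    and "L - K = dual_edge c d 1" and "M - L = dual_edge c d 2"
    and "N - M = dual_edge c d 3" and "K - N = dual_edge c d 4"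
  shows "nonconvex_quad K L M N"
proof -
  have frame: "orthonormal_frame (vec_a u) (vec_b u) c d"
    using assms(2-4) by (rule admissible_roots_orthonormal_frame)
  have "minor2 c d 1 2 * minor2 c d 2 3 * minor2 c d 3 4 * minor2 c d 4 1 > 0"
    using admissible_roots_dot_signs(5)[OF assms(1,3)] unfolding minor2_vec_a_vec_b[symmetric]
    by (rule cyclic_minor2_prod_pos[OF orthonormal_frame_rows[OF frame]])
  moreover have "- dot (u 1) (u 2) * - dot (u 2) (u 3) * - dot (u 3) (u 4) * - dot (u 4) (u 1) < 0"
  proof -
    have "- r1 * - r2 * - r3 * - r4 < 0" if "r1 > 0" "r2 > 0" "r3 > 0" "r4 < 0" for r1 r2 r3 r4 :: real
      using that by (simp add: mult_pos_neg)
    then show ?thesis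
      using admissible_roots_dot_signs(1-4)[OF assms(1,3)] .
  qed
  moreover have "turn K L M N 1 * turn K L M N 2 * turn K L M N 3 * turn K L M N 4 =
      16 * (- dot (u 1) (u 2) * - dot (u 2) (u 3) * - dot (u 3) (u 4) * - dot (u 4) (u 1)) *
      (minor2 c d 1 2 * minor2 c d 2 3 * minor2 c d 3 4 * minor2 c d 4 1)"
    unfolding dual_turns[OF assms(5-8)] orthonormal_frame_dual_dots[OF frame] by (simp only: mult_ac)
  ultimately have "turn K L M N 1 * turn K L M N 2 * turn K L M N 3 * turn K L M N 4 < 0"
    by (metis mult_neg_pos mult_pos_neg zero_less_numeral)
  then show ?thesis
    by (simp add: nonconvex_quad_iff_turns)
qed

end
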